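(* Let $n\ge 3$ and $1\le k\le n-1$. Then \[ I_{k-1} \subseteq \bigcap_{1\le i<j\le n-1} P_{ij} \;\cap\; \mathcal J_{K_n} \;\cap\; \bigcap_{t=k}^{n-1}P_{tn}. \]
   Context: Let $\Bbbk$ be a field and $R=\Bbbk[x_1,\dots,x_n,y_1,\dots,y_n]$ the standard graded polynomial ring. For $1\le i<j\le n$ put $f_{ij}=x_iy_j-x_jy_i$ and $g_{ij}=x_ix_j-y_iy_j$. The parity binomial edge ideal of the complete graph $K_n$ is $\mathcal I_{K_n}=(g_{ij}\mid 1\le i<j\le n)$. Let $\mathcal J_{K_n}=\mathcal I_{K_n}:(\prod_{i=1}^n x_iy_i)^\infty=\bigcup_{t\ge1}\mathcal I_{K_n}:(\prod_{i=1}^n x_iy_i)^t$. For $I\subseteq[n]$ let $\mathfrak m_I=(x_i,y_i\mid i\in I)$, and for $1\le i<j\le n$ let $P_{ij}=(g_{ij})+\mathfrak m_{[n]\setminus\{i,j\}}$. Define $I_0=\mathcal I_{K_n}$ and inductively $I_k=I_{k-1}+(f_{kn})$ for $1\le k\le n-1$. *)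

theory Defs
  imports "HOL-Library.Poly_Mapping"
begin

text \<open>Variables x_i (X i) and y_i (Y i); the ring R = k[x_1..x_n,y_1..y_n] is the set
of polynomials (over a field 'k) whose variables have index in {1..n}.\<close>

datatype var = X nat | Y nat

fun vidx :: "var \<Rightarrow> nat" where
  "vidx (X i) = i" | "vidx (Y i) = i"

type_synonym 'k mpoly = "(var \<Rightarrow>\<^sub>0 nat) \<Rightarrow>\<^sub>0 'k"

definition Var :: "var \<Rightarrow> 'k::field mpoly" where
  "Var v = Poly_Mapping.single (Poly_Mapping.single v 1) 1"

abbreviation xv :: "nat \<Rightarrow> 'k::field mpoly" where "xv i \<equiv> Var (X i)"
abbreviation yv :: "nat \<Rightarrow> 'k::field mpoly" where "yv i \<equiv> Var (Y i)"

definition Ring :: "nat \<Rightarrow> 'k::field mpoly set" where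
  "Ring n = {p. \<forall>m \<in> Poly_Mapping.keys p. \<forall>v \<in> Poly_Mapping.keys m. vidx v \<in> {1..n}}"

definition is_ideal :: "'k::field mpoly set \<Rightarrow> 'k mpoly set \<Rightarrow> bool" where
  "is_ideal R I \<longleftrightarrow> I \<subseteq> R \<and> 0 \<in> I \<and> (\<forall>a\<in>I. \<forall>b\<in>I. a + b \<in> I)
     \<and> (\<forall>r\<in>R. \<forall>a\<in>I. r * a \<in> I)"

definition ideal_gen :: "'k::field mpoly set \<Rightarrow> 'k mpoly set \<Rightarrow> 'k mpoly set" where
  "ideal_gen R S = \<Inter>{I. is_ideal R I \<and> S \<subseteq> I}"

definition saturation :: "'k::field mpoly set \<Rightarrow> 'k mpoly set \<Rightarrow> 'k mpoly \<Rightarrow> 'k mpoly set" where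
  "saturation R I f = (\<Union>t\<in>{1..}. {g \<in> R. f ^ t * g \<in> I})"

definition fpol :: "nat \<Rightarrow> nat \<Rightarrow> 'k::field mpoly" where
  "fpol i j = xv i * yv j - xv j * yv i"

definition gpol :: "nat \<Rightarrow> nat \<Rightarrow> 'k::field mpoly" where
  "gpol i j = xv i * xv j - yv i * yv j"

definition parityIK :: "nat \<Rightarrow> 'k::field mpoly set" where
  "parityIK n = ideal_gen (Ring n) {gpol i j | i j. 1 \<le> i \<and> i < j \<and> j \<le> n}"

definition JK :: "nat \<Rightarrow> 'k::field mpoly set" where
  "JK n = saturation (Ring n) (parityIK n) (\<Prod>i\<in>{1..n}. xv i * yv i)"

definition mI :: "nat \<Rightarrow> nat set \<Rightarrow> 'k::field mpoly set" where
  "mI n I = ideal_gen (Ring n) ({xv i | i. i \<in> I} \<union> {yv i | i. i \<in> I})"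

definition Pid :: "nat \<Rightarrow> nat \<Rightarrow> nat \<Rightarrow> 'k::field mpoly set" where
  "Pid n i j = ideal_gen (Ring n) ({gpol i j} \<union> mI n ({1..n} - {i, j}))"

fun Iseq :: "nat \<Rightarrow> nat \<Rightarrow> 'k::field mpoly set" where
  "Iseq n 0 = parityIK n"
| "Iseq n (Suc k) = ideal_gen (Ring n) (Iseq n k \<union> {fpol (Suc k) n})"

end

theory Submission
  imports Defs
begin

text \<open>
  Each generator of \<open>I\<^sub>k\<^sub>-\<^sub>1\<close> lies in every ideal on the right. A binomial
  \<open>g\<^sub>a\<^sub>b\<close> or \<open>f\<^sub>a\<^sub>b\<close> with \<open>{a,b} \<noteq> {i,j}\<close> has an index outside \<open>{i,j}\<close>, so both of
  its terms are divisible by a variable of \<open>m\<^bsub>[n]-{i,j}\<^esub> \<subseteq> P\<^sub>i\<^sub>j\<close>; the only generator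
  with \<open>{a,b} = {t,n}\<close> would be \<open>f\<^sub>t\<^sub>n\<close> with \<open>t \<le> k - 1\<close>, which does not occur. For the
  saturation \<open>J\<close>, a third index \<open>l \<notin> {s,n}\<close> (here \<open>n \<ge> 3\<close> is used) gives
  \<open>x\<^sub>l f\<^sub>s\<^sub>n = y\<^sub>n g\<^sub>s\<^sub>l - y\<^sub>s g\<^sub>n\<^sub>l\<close>, hence \<open>(\<Prod>\<^sub>i x\<^sub>i y\<^sub>i) f\<^sub>s\<^sub>n \<in> I\<^sub>K\<^sub>n\<close>.
\<close>

lemma Ring_zero: "0 \<in> Ring n"
  unfolding Ring_def by simp

lemma Ring_one: "1 \<in> Ring n"
  unfolding Ring_def by simp

lemma Ring_Var: "vidx v \<in> {1..n} \<Longrightarrow> Var v \<in> Ring n"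
  unfolding Ring_def Var_def by simp

lemma Ring_uminus: "p \<in> Ring n \<Longrightarrow> - p \<in> Ring n"
  unfolding Ring_def by simp

lemma Ring_add:
  assumes "p \<in> Ring n" "q \<in> Ring n"
  shows "p + q \<in> Ring n"
  using assms keys_add[of p q] unfolding Ring_def by blast

lemma Ring_diff: "p \<in> Ring n \<Longrightarrow> q \<in> Ring n \<Longrightarrow> p - q \<in> Ring n"
  unfolding diff_conv_add_uminus by (intro Ring_add Ring_uminus)

lemma Ring_mult:
  assumes p: "p \<in> Ring n" and q: "q \<in> Ring n"
  shows "p * q \<in> Ring n"
  unfolding Ring_def mem_Collect_eq
proof (intro ballI)
  fix m v
  assume "m \<in> Poly_Mapping.keys (p * q)" and v: "v \<in> Poly_Mapping.keys m"
  then obtain a b where "m = a + b" "a \<in> Poly_Mapping.keys p" "b \<in> Poly_Mapping.keys q"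
    using keys_mult[of p q] by blast
  with v keys_add[of a b] p q show "vidx v \<in> {1..n}"
    unfolding Ring_def by blast
qed

lemma Ring_power: "p \<in> Ring n \<Longrightarrow> p ^ e \<in> Ring n"
  by (induction e) (auto intro: Ring_one Ring_mult)

lemma Ring_prod: "(\<And>i. i \<in> A \<Longrightarrow> f i \<in> Ring n) \<Longrightarrow> prod f A \<in> Ring n"
  by (induction A rule: infinite_finite_induct) (auto intro: Ring_one Ring_mult)

lemma xv_in_Ring: "1 \<le> i \<Longrightarrow> i \<le> n \<Longrightarrow> xv i \<in> Ring n"
  by (rule Ring_Var) simp

lemma yv_in_Ring: "1 \<le> i \<Longrightarrow> i \<le> n \<Longrightarrow> yv i \<in> Ring n"
  by (rule Ring_Var) simp

lemma gpol_in_Ring: "1 \<le> i \<Longrightarrow> i \<le> n \<Longrightarrow> 1 \<le> j \<Longrightarrow> j \<le> n \<Longrightarrow> gpol i j \<in> Ring n"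
  unfolding gpol_def by (intro Ring_diff Ring_mult xv_in_Ring yv_in_Ring)

lemma fpol_in_Ring: "1 \<le> i \<Longrightarrow> i \<le> n \<Longrightarrow> 1 \<le> j \<Longrightarrow> j \<le> n \<Longrightarrow> fpol i j \<in> Ring n"
  unfolding fpol_def by (intro Ring_diff Ring_mult xv_in_Ring yv_in_Ring)

lemma prod_xv_yv_in_Ring: "(\<Prod>i\<in>{1..n}. xv i * yv i) \<in> Ring n"
  by (intro Ring_prod Ring_mult xv_in_Ring yv_in_Ring) auto

lemma gpol_commute: "gpol i j = gpol j i"
  by (simp add: gpol_def mult.commute)

lemma fpol_swap: "fpol j i = - fpol i j"
  by (simp add: fpol_def mult.commute)

lemma is_ideal_Ring: "is_ideal (Ring n) (Ring n)"
  unfolding is_ideal_def by (auto intro: Ring_zero Ring_add Ring_mult)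

lemma is_ideal_ideal_gen:
  assumes "is_ideal R R" "S \<subseteq> R"
  shows "is_ideal R (ideal_gen R S)"
  unfolding is_ideal_def
proof (intro conjI ballI)
  show "ideal_gen R S \<subseteq> R"
    using assms unfolding ideal_gen_def by blast
qed (auto simp: ideal_gen_def is_ideal_def)

lemma ideal_gen_least: "is_ideal R I \<Longrightarrow> S \<subseteq> I \<Longrightarrow> ideal_gen R S \<subseteq> I"
  unfolding ideal_gen_def by blast

lemma ideal_gen_generator: "a \<in> S \<Longrightarrow> a \<in> ideal_gen R S"
  unfolding ideal_gen_def by blast

lemma ideal_mult_left: "is_ideal R I \<Longrightarrow> r \<in> R \<Longrightarrow> a \<in> I \<Longrightarrow> r * a \<in> I"
  unfolding is_ideal_def by blast

lemma ideal_mult_right: "is_ideal R I \<Longrightarrow> r \<in> R \<Longrightarrow> a \<in> I \<Longrightarrow> a * r \<in> I"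
  unfolding is_ideal_def by (metis mult.commute)

lemma ideal_add: "is_ideal R I \<Longrightarrow> a \<in> I \<Longrightarrow> b \<in> I \<Longrightarrow> a + b \<in> I"
  unfolding is_ideal_def by blast

lemma ideal_subset: "is_ideal R I \<Longrightarrow> I \<subseteq> R"
  unfolding is_ideal_def by blast

lemma ideal_uminus:
  assumes "is_ideal (Ring n) I" "a \<in> I"
  shows "- a \<in> I"
  using ideal_mult_left[OF assms(1) Ring_uminus[OF Ring_one] assms(2)] by simp

lemma ideal_diff:
  assumes "is_ideal (Ring n) I" "a \<in> I" "b \<in> I"
  shows "a - b \<in> I"
  unfolding diff_conv_add_uminus using assms by (intro ideal_add ideal_uminus)

lemma ideal_gpol_fpol_of_vars:
  assumes I: "is_ideal (Ring n) I" and "xv i \<in> I" "yv i \<in> I" and "1 \<le> j" "j \<le> n"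
  shows "gpol i j \<in> I" "fpol i j \<in> I"
proof -
  have "xv j \<in> Ring n" "yv j \<in> Ring n"
    using assms(4,5) by (rule xv_in_Ring, rule yv_in_Ring)
  then have "xv i * xv j \<in> I" "yv i * yv j \<in> I" "xv i * yv j \<in> I" "yv i * xv j \<in> I"
    using ideal_mult_right[OF I] assms(2,3) by blast+
  then show "gpol i j \<in> I" "fpol i j \<in> I"
    unfolding gpol_def fpol_def by (auto intro: ideal_diff[OF I] simp: mult.commute)
qed

lemma is_ideal_saturation:
  fixes f :: "'k::field mpoly"
  assumes I: "is_ideal (Ring n) I" and f: "f \<in> Ring n"
  shows "is_ideal (Ring n) (saturation (Ring n) I f)"
  unfolding is_ideal_def
proof (intro conjI ballI)
  show "saturation (Ring n) I f \<subseteq> Ring n"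
    unfolding saturation_def by blast
  show "0 \<in> saturation (Ring n) I f"
    using I Ring_zero unfolding saturation_def is_ideal_def by force
next
  fix a b assume "a \<in> saturation (Ring n) I f" "b \<in> saturation (Ring n) I f"
  then obtain t u where t: "t \<ge> 1" "a \<in> Ring n" "f ^ t * a \<in> I"
    and u: "u \<ge> 1" "b \<in> Ring n" "f ^ u * b \<in> I"
    unfolding saturation_def by auto
  have "f ^ (t + u) * (a + b) = f ^ u * (f ^ t * a) + f ^ t * (f ^ u * b)"
    by (simp add: power_add algebra_simps)
  also have "\<dots> \<in> I"
    using t(3) u(3) by (blast intro: ideal_add[OF I] ideal_mult_left[OF I Ring_power[OF f]])
  finally show "a + b \<in> saturation (Ring n) I f"
    using t u Ring_add unfolding saturation_def by force
next
  fix r a :: "'k mpoly" assume r: "r \<in> Ring n" and "a \<in> saturation (Ring n) I f"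
  then obtain t where t: "t \<ge> 1" "a \<in> Ring n" "f ^ t * a \<in> I"
    unfolding saturation_def by auto
  have "f ^ t * (r * a) = r * (f ^ t * a)"
    by (simp add: ac_simps)
  also have "\<dots> \<in> I"
    using ideal_mult_left[OF I r t(3)] .
  finally show "r * a \<in> saturation (Ring n) I f"
    using t r Ring_mult unfolding saturation_def by force
qed

lemma saturation_memI_factor:
  assumes I: "is_ideal R I" and "g \<in> R" "q \<in> R" "f = q * h" "h * g \<in> I"
  shows "g \<in> saturation R I f"
proof -
  have "f ^ 1 * g = q * (h * g)"
    using assms by (simp add: ac_simps)
  also have "\<dots> \<in> I"
    using ideal_mult_left[OF I \<open>q \<in> R\<close> \<open>h * g \<in> I\<close>] .
  finally show ?thesis
    using assms unfolding saturation_def by force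
qed

lemma Iseq_subset_ideal:
  assumes I: "is_ideal (Ring n) I"
    and g: "\<And>i j. 1 \<le> i \<Longrightarrow> i < j \<Longrightarrow> j \<le> n \<Longrightarrow> gpol i j \<in> I"
    and f: "\<And>s. 1 \<le> s \<Longrightarrow> s \<le> m \<Longrightarrow> fpol s n \<in> I"
  shows "Iseq n m \<subseteq> I"
  using f
proof (induction m)
  case 0
  show ?case
    unfolding Iseq.simps parityIK_def by (rule ideal_gen_least[OF I]) (auto intro: g)
next
  case (Suc m)
  then show ?case
    unfolding Iseq.simps by (intro ideal_gen_least[OF I]) auto
qed

lemma is_ideal_parityIK: "is_ideal (Ring n) (parityIK n)"
  unfolding parityIK_def by (intro is_ideal_ideal_gen is_ideal_Ring) (auto intro: gpol_in_Ring)

lemma gpol_in_parityIK: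
  assumes "1 \<le> i" "i \<le> n" "1 \<le> j" "j \<le> n" "i \<noteq> j"
  shows "gpol i j \<in> parityIK n"
proof (cases "i < j")
  case True
  then show ?thesis
    unfolding parityIK_def using assms by (auto intro!: ideal_gen_generator)
next
  case False
  with assms have "j < i" by simp
  then show ?thesis
    unfolding parityIK_def gpol_commute[of i j] using assms by (auto intro!: ideal_gen_generator)
qed

lemma is_ideal_JK: "is_ideal (Ring n) (JK n)"
  unfolding JK_def
  by (intro is_ideal_saturation is_ideal_parityIK prod_xv_yv_in_Ring)

lemma parityIK_subset_JK: "parityIK n \<subseteq> JK n"
proof
  fix p assume p: "p \<in> parityIK n"
  show "p \<in> JK n"
    unfolding JK_def
    using p ideal_subset[OF is_ideal_parityIK]
      ideal_mult_left[OF is_ideal_parityIK prod_xv_yv_in_Ring p]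
    by (intro saturation_memI_factor[OF is_ideal_parityIK _ Ring_one]) auto
qed

lemma fpol_in_JK:
  assumes n: "n \<ge> 3" and s: "1 \<le> s" "s < n"
  shows "fpol s n \<in> JK n"
proof -
  define l where "l = (if s = 1 then 2 else (1::nat))"
  have l: "1 \<le> l" "l \<le> n" "l \<noteq> s" "l \<noteq> n"
    using n s unfolding l_def by auto
  have "xv l * fpol s n = yv n * gpol s l - yv s * gpol n l"
    unfolding fpol_def gpol_def by (simp add: algebra_simps)
  also have "\<dots> \<in> parityIK n"
    using l s
    by (intro ideal_diff[OF is_ideal_parityIK] ideal_mult_left[OF is_ideal_parityIK]
        gpol_in_parityIK yv_in_Ring) auto
  finally have xf: "xv l * fpol s n \<in> parityIK n" .
  have "(\<Prod>i\<in>{1..n}. xv i * yv i) = (yv l * (\<Prod>i\<in>{1..n} - {l}. xv i * yv i)) * xv l"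
    using l by (subst prod.remove[of _ l]) (auto simp: ac_simps)
  moreover have "yv l * (\<Prod>i\<in>{1..n} - {l}. xv i * yv i) \<in> Ring n"
    using l by (intro Ring_mult Ring_prod xv_in_Ring yv_in_Ring) auto
  ultimately show ?thesis
    unfolding JK_def using xf s
    by (intro saturation_memI_factor[OF is_ideal_parityIK] fpol_in_Ring) auto
qed

lemma Iseq_subset_JK:
  assumes "n \<ge> 3" "m < n"
  shows "Iseq n m \<subseteq> JK n"
  using assms
  by (intro Iseq_subset_ideal is_ideal_JK parityIK_subset_JK[THEN subsetD]
      gpol_in_parityIK fpol_in_JK) auto

lemma is_ideal_Pid:
  assumes "1 \<le> i" "i \<le> n" "1 \<le> j" "j \<le> n"
  shows "is_ideal (Ring n) (Pid n i j)"
proof -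
  have "mI n ({1..n} - {i, j}) \<subseteq> Ring n"
    unfolding mI_def
    by (rule ideal_subset[OF is_ideal_ideal_gen[OF is_ideal_Ring]]) (auto intro: xv_in_Ring yv_in_Ring)
  then show ?thesis
    unfolding Pid_def using assms by (intro is_ideal_ideal_gen is_ideal_Ring) (auto intro: gpol_in_Ring)
qed

lemma vars_in_Pid:
  assumes "1 \<le> l" "l \<le> n" "l \<noteq> i" "l \<noteq> j"
  shows "xv l \<in> Pid n i j" "yv l \<in> Pid n i j"
  using assms unfolding Pid_def mI_def by (auto intro!: ideal_gen_generator)

lemma gpol_in_Pid: "gpol i j \<in> Pid n i j"
  unfolding Pid_def by (auto intro!: ideal_gen_generator)

lemma Iseq_subset_Pid:
  assumes ab: "1 \<le> a" "a < b" "b \<le> n" and "m < n" and bn: "b = n \<Longrightarrow> m < a"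
  shows "Iseq n m \<subseteq> Pid n a b"
proof -
  have I: "is_ideal (Ring n) (Pid n a b)"
    using ab by (intro is_ideal_Pid) auto
  have outside: "gpol l j \<in> Pid n a b \<and> fpol l j \<in> Pid n a b"
    if "1 \<le> l" "l \<le> n" "l \<notin> {a, b}" "1 \<le> j" "j \<le> n" for l j
    using that by (auto intro!: ideal_gpol_fpol_of_vars[OF I] vars_in_Pid)
  show ?thesis
  proof (rule Iseq_subset_ideal[OF I])
    fix i j assume ij: "1 \<le> i" "i < j" "j \<le> n"
    show "gpol i j \<in> Pid n a b"
    proof (cases "i = a \<and> j = b")
      case True
      then show ?thesis using gpol_in_Pid by blast
    next
      case False
      with ij ab have "i \<notin> {a, b} \<or> j \<notin> {a, b}" by auto
      with ij show ?thesis
        using outside[of i j] outside[of j i] by (auto simp: gpol_commute[of j i])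
    qed
  next
    fix s assume s: "1 \<le> s" "s \<le> m"
    show "fpol s n \<in> Pid n a b"
    proof (cases "b = n")
      case True
      with bn s ab have "s \<notin> {a, b}" by auto
      with s \<open>m < n\<close> show ?thesis using outside[of s n] by auto
    next
      case False
      with ab s \<open>m < n\<close> have "fpol n s \<in> Pid n a b"
        using outside[of n s] by auto
      then show ?thesis
        unfolding fpol_swap[of s n] by (rule ideal_uminus[OF I])
    qed
  qed
qed

theorem lemma3p2:
  fixes n k :: nat
  assumes "n \<ge> 3" and "1 \<le> k" and "k \<le> n - 1"
  shows "(Iseq n (k - 1) :: 'k::field mpoly set) \<subseteq>
    (\<Inter>{Pid n i j | i j. 1 \<le> i \<and> i < j \<and> j \<le> n - 1}) \<inter> JK n
      \<inter> (\<Inter>t\<in>{k..n-1}. Pid n t n)"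
proof -
  have "Iseq n (k - 1) \<subseteq> Pid n i j" if "1 \<le> i" "i < j" "j \<le> n - 1" for i j
    using that assms by (intro Iseq_subset_Pid) auto
  moreover have "Iseq n (k - 1) \<subseteq> Pid n t n" if "t \<in> {k..n-1}" for t
    using that assms by (intro Iseq_subset_Pid) auto
  moreover have "Iseq n (k - 1) \<subseteq> JK n"
    using assms by (intro Iseq_subset_JK) auto
  ultimately show ?thesis
    by blast
qed

end
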